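(* The polynomials $P_1=(xyz-z+y+x)^2$, $P_2=(yz-xz+xy+1)^2$, $P_3=(yz-xz-xy-1)^2$, $P_4=(xz+yz+xy-1)^2$ are extremal polynomials in the classes $Q_P(2,2,2)$ and $\sigma_P(2,2,2)$.
   Context: $\sigma_P(2,2,2)$ is the set of real polynomials $f(x,y,z)=\sum_{0\le k,\ell,m\le2}a_{k,\ell,m}x^ky^\ell z^m$ that are nonnegative on $\mathbb R^3$; $Q_P(2,2,2)$ is the set of $f\in\sigma_P(2,2,2)$ that can be written as $\sum_{j=1}^r|F_j(x,y,z)|^2$ with polynomials $F_j$. An element $f$ of a convex cone $U$ is extremal in $U$ if whenever $f=g+h$ with $g,h\in U$, both $g$ and $h$ are nonnegative multiples of $f$. *)

theory Defs
  imports Complex_Main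
begin

definition poly222 :: "(real \<Rightarrow> real \<Rightarrow> real \<Rightarrow> real) \<Rightarrow> bool" where
  "poly222 f \<longleftrightarrow> (\<exists>a :: nat \<Rightarrow> nat \<Rightarrow> nat \<Rightarrow> real.
     f = (\<lambda>x y z. \<Sum>k\<le>2. \<Sum>l\<le>2. \<Sum>m\<le>2. a k l m * x ^ k * y ^ l * z ^ m))"

definition cpoly3 :: "(real \<Rightarrow> real \<Rightarrow> real \<Rightarrow> complex) \<Rightarrow> bool" where
  "cpoly3 F \<longleftrightarrow> (\<exists>(N::nat) (c :: nat \<Rightarrow> nat \<Rightarrow> nat \<Rightarrow> complex).
     F = (\<lambda>x y z. \<Sum>k\<le>N. \<Sum>l\<le>N. \<Sum>m\<le>N.
            c k l m * complex_of_real x ^ k * complex_of_real y ^ l * complex_of_real z ^ m))"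

definition sigmaP222 :: "(real \<Rightarrow> real \<Rightarrow> real \<Rightarrow> real) set" where
  "sigmaP222 = {f. poly222 f \<and> (\<forall>x y z. f x y z \<ge> 0)}"

definition QP222 :: "(real \<Rightarrow> real \<Rightarrow> real \<Rightarrow> real) set" where
  "QP222 = {f \<in> sigmaP222. \<exists>(r::nat) F. (\<forall>j<r. cpoly3 (F j)) \<and>
              f = (\<lambda>x y z. \<Sum>j<r. (cmod (F j x y z))\<^sup>2)}"

definition extremal :: "(real \<Rightarrow> real \<Rightarrow> real \<Rightarrow> real) set \<Rightarrow> (real \<Rightarrow> real \<Rightarrow> real \<Rightarrow> real) \<Rightarrow> bool" where
  "extremal U f \<longleftrightarrow> f \<in> U \<and>
     (\<forall>g h. g \<in> U \<longrightarrow> h \<in> U \<longrightarrow> f = (\<lambda>x y z. g x y z + h x y z) \<longrightarrow>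
        (\<exists>c\<ge>0. g = (\<lambda>x y z. c * f x y z)) \<and> (\<exists>c\<ge>0. h = (\<lambda>x y z. c * f x y z)))"

end

theory Submission
  imports Defs
begin

text \<open>Let \<open>L\<close> be multiaffine and \<open>0 \<le> g \<le> L^2\<close> with \<open>g\<close> of degree at most two in each
  variable. On every line parallel to a coordinate axis \<open>g\<close> is a nonnegative quadratic below
  the square of an affine function, so it is the multiple of that square given by the ratio of
  leading coefficients: \<open>g (\<partial>\<^sub>zL)^2 = g\<^sub>z\<^sub>2 L^2\<close>, where \<open>g\<^sub>z\<^sub>2\<close> is the
  coefficient of \<open>z^2\<close> in \<open>g\<close>, and likewise in \<open>x\<close> and \<open>y\<close>. Comparing the coefficients
  of \<open>z^4\<close> in the \<open>x\<close>- and \<open>y\<close>-identities forces \<open>g\<^sub>z\<^sub>2 = c (\<partial>\<^sub>zL)^2\<close> for a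
  constant \<open>c\<close> when \<open>\<partial>\<^sub>zL\<close> is \<open>s x + y\<close> or \<open>x y - 1\<close>, and then \<open>g = c L^2\<close>. So the
  only summands of \<open>L^2\<close> in \<open>\<sigma>\<^sub>P(2,2,2)\<close> are its nonnegative multiples; being a single
  square, \<open>L^2\<close> also lies in \<open>Q\<^sub>P(2,2,2)\<close>.\<close>

section \<open>Quadratics in one variable\<close>

lemma quadratic_leading_coeff_zero_if_bounded:
  fixes A B C M :: real
  assumes nonneg: "\<And>t. 0 \<le> A + B*t + C*t^2" and bounded: "\<And>t. A + B*t + C*t^2 \<le> M"
  shows "C = 0"
proof (rule ccontr)
  assume "C \<noteq> 0"
  define t where "t = sqrt ((\<bar>A\<bar> + \<bar>M\<bar> + 1) / \<bar>C\<bar>)"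
  have "\<bar>C\<bar> * t^2 = \<bar>A\<bar> + \<bar>M\<bar> + 1"
    using \<open>C \<noteq> 0\<close> by (simp add: t_def)
  moreover have "0 \<le> A + C*t^2" "A + C*t^2 \<le> M"
    \<comment> \<open>average the values at \<open>t\<close> and \<open>-t\<close>\<close>
    using nonneg[of t] nonneg[of "-t"] bounded[of t] bounded[of "-t"] by auto
  ultimately show False
    by (cases "C > 0") (auto simp: abs_if split: if_splits)
qed

lemma quadratic_linear_coeff_zero_if_nonneg:
  fixes B C :: real
  assumes nonneg: "\<And>u. 0 \<le> B*u + C*u^2"
  shows "B = 0"
proof (rule ccontr)
  assume "B \<noteq> 0"
  define m where "m = \<bar>C\<bar> + 1"
  have "m > 0" "C - m < 0" by (auto simp: m_def)
  have "B * (-B/m) + C * (-B/m)^2 = B^2/m^2 * (C - m)"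
    using \<open>m > 0\<close> by (simp add: field_simps power2_eq_square)
  also have "\<dots> < 0"
    using \<open>B \<noteq> 0\<close> \<open>m > 0\<close> \<open>C - m < 0\<close> by (intro mult_pos_neg) auto
  finally show False using nonneg[of "-B/m"] by simp
qed

lemma quadratic_dominated_by_square:
  fixes A B C \<alpha> \<beta> t :: real
  assumes nonneg: "\<And>t. 0 \<le> A + B*t + C*t^2"
    and dominated: "\<And>t. A + B*t + C*t^2 \<le> (\<alpha>*t + \<beta>)^2"
  shows "(A + B*t + C*t^2) * \<alpha>^2 = C * (\<alpha>*t + \<beta>)^2"
proof (cases "\<alpha> = 0")
  case True
  then have "C = 0"
    using quadratic_leading_coeff_zero_if_bounded[OF nonneg, of "\<beta>^2"] dominated by simp
  with True show ?thesis by simp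
next
  case False
  define t0 where "t0 = -\<beta>/\<alpha>"
  have lin: "\<alpha>*t + \<beta> = \<alpha>*(t - t0)" for t
    using False by (simp add: t0_def field_simps)
  have root: "A + B*t0 + C*t0^2 = 0"
    using nonneg[of t0] dominated[of t0] lin[of t0] by simp
  have shifted: "A + B*(t0 + u) + C*(t0 + u)^2 = (B + 2*C*t0)*u + C*u^2" for u
    using root by (simp add: algebra_simps power2_eq_square)
  have "B + 2*C*t0 = 0"
    by (rule quadratic_linear_coeff_zero_if_nonneg[of _ C]) (metis nonneg shifted)
  then have "A + B*t + C*t^2 = C*(t - t0)^2"
    using shifted[of "t - t0"] by simp
  then show ?thesis
    using lin[of t] by (simp add: power_mult_distrib)
qed

lemma quadratic_zero_at_point_if_zero_elsewhere:
  fixes A B C t0 :: real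
  assumes "\<And>t. t \<noteq> t0 \<Longrightarrow> A + B*t + C*t^2 = 0"
  shows "A + B*t0 + C*t0^2 = 0"
proof -
  have "A + B*(t0+1) + C*(t0+1)^2 = 0" "A + B*(t0+2) + C*(t0+2)^2 = 0"
    "A + B*(t0+3) + C*(t0+3)^2 = 0"
    using assms by auto
  moreover have "A + B*t0 + C*t0^2 = 3*(A + B*(t0+1) + C*(t0+1)^2)
      - 3*(A + B*(t0+2) + C*(t0+2)^2) + (A + B*(t0+3) + C*(t0+3)^2)"
    by (simp add: algebra_simps power2_eq_square)
  ultimately show ?thesis by simp
qed

text \<open>The fourth finite difference at \<open>0, \<dots>, 4\<close> of a quartic is \<open>24\<close> times its leading
  coefficient.\<close>
lemma quartic_leading_coeff_eq:
  fixes A B C p q A' B' C' p' q' :: real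
  assumes "\<And>z. (A + B*z + C*z^2) * (p*z + q)^2 = (A' + B'*z + C'*z^2) * (p'*z + q')^2"
  shows "C * p^2 = C' * p'^2"
proof -
  define Q where "Q A B C p q z = (A + B*z + C*z^2) * (p*z + q)^2" for A B C p q z :: real
  have diff4: "Q A B C p q 0 - 4*Q A B C p q 1 + 6*Q A B C p q 2 - 4*Q A B C p q 3 + Q A B C p q 4
      = 24*(C*p^2)" for A B C p q
    by (simp add: Q_def algebra_simps power2_eq_square)
  have "Q A B C p q z = Q A' B' C' p' q' z" for z
    using assms by (simp add: Q_def)
  then show ?thesis
    using diff4[of A B C p q] diff4[of A' B' C' p' q'] by simp
qed

section \<open>Polynomials of degree two in each variable below a square\<close>

definition eval222 :: "(nat \<Rightarrow> nat \<Rightarrow> nat \<Rightarrow> real) \<Rightarrow> real \<Rightarrow> real \<Rightarrow> real \<Rightarrow> real" where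
  "eval222 a x y z = (\<Sum>k\<le>2. \<Sum>l\<le>2. \<Sum>m\<le>2. a k l m * x^k * y^l * z^m)"

lemma poly222_iff_eval222: "poly222 f \<longleftrightarrow> (\<exists>a. f = eval222 a)"
  unfolding poly222_def eval222_def by (simp add: fun_eq_iff)

definition zcoeff :: "(nat \<Rightarrow> nat \<Rightarrow> nat \<Rightarrow> real) \<Rightarrow> nat \<Rightarrow> real \<Rightarrow> real \<Rightarrow> real" where
  "zcoeff a m x y = (\<Sum>k\<le>2. \<Sum>l\<le>2. a k l m * x^k * y^l)"

definition xcoeff :: "(nat \<Rightarrow> nat \<Rightarrow> nat \<Rightarrow> real) \<Rightarrow> nat \<Rightarrow> real \<Rightarrow> real \<Rightarrow> real" where
  "xcoeff a k y z = (\<Sum>l\<le>2. \<Sum>m\<le>2. a k l m * y^l * z^m)"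

definition ycoeff :: "(nat \<Rightarrow> nat \<Rightarrow> nat \<Rightarrow> real) \<Rightarrow> nat \<Rightarrow> real \<Rightarrow> real \<Rightarrow> real" where
  "ycoeff a l x z = (\<Sum>k\<le>2. \<Sum>m\<le>2. a k l m * x^k * z^m)"

definition x2zcoeff :: "(nat \<Rightarrow> nat \<Rightarrow> nat \<Rightarrow> real) \<Rightarrow> nat \<Rightarrow> real \<Rightarrow> real" where
  "x2zcoeff a m y = (\<Sum>l\<le>2. a 2 l m * y^l)"

definition y2zcoeff :: "(nat \<Rightarrow> nat \<Rightarrow> nat \<Rightarrow> real) \<Rightarrow> nat \<Rightarrow> real \<Rightarrow> real" where
  "y2zcoeff a m x = (\<Sum>k\<le>2. a k 2 m * x^k)"

definition z2ycoeff :: "(nat \<Rightarrow> nat \<Rightarrow> nat \<Rightarrow> real) \<Rightarrow> nat \<Rightarrow> real \<Rightarrow> real" where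
  "z2ycoeff a l x = (\<Sum>k\<le>2. a k l 2 * x^k)"

lemma sum_atMost_2: "(\<Sum>k\<le>(2::nat). f k) = f 0 + f 1 + (f 2 :: 'a::comm_monoid_add)"
  by (simp add: numeral_2_eq_2 add.assoc)

lemma eval222_in_z: "eval222 a x y z = zcoeff a 0 x y + zcoeff a 1 x y * z + zcoeff a 2 x y * z^2"
  by (simp add: eval222_def zcoeff_def sum_atMost_2 algebra_simps)

lemma eval222_in_x: "eval222 a x y z = xcoeff a 0 y z + xcoeff a 1 y z * x + xcoeff a 2 y z * x^2"
  by (simp add: eval222_def xcoeff_def sum_atMost_2 algebra_simps)

lemma eval222_in_y: "eval222 a x y z = ycoeff a 0 x z + ycoeff a 1 x z * y + ycoeff a 2 x z * y^2"
  by (simp add: eval222_def ycoeff_def sum_atMost_2 algebra_simps)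

lemma xcoeff_2_in_z: "xcoeff a 2 y z = x2zcoeff a 0 y + x2zcoeff a 1 y * z + x2zcoeff a 2 y * z^2"
  by (simp add: xcoeff_def x2zcoeff_def sum_atMost_2 algebra_simps)

lemma ycoeff_2_in_z: "ycoeff a 2 x z = y2zcoeff a 0 x + y2zcoeff a 1 x * z + y2zcoeff a 2 x * z^2"
  by (simp add: ycoeff_def y2zcoeff_def sum_atMost_2 algebra_simps)

lemma zcoeff_2_in_y: "zcoeff a 2 x y = z2ycoeff a 0 x + z2ycoeff a 1 x * y + z2ycoeff a 2 x * y^2"
  by (simp add: zcoeff_def z2ycoeff_def sum_atMost_2 algebra_simps)

lemma eval222_dominated_slice_z:
  assumes nonneg: "\<And>x y z. 0 \<le> eval222 a x y z"
    and dominated: "\<And>x y z. eval222 a x y z \<le> (L x y z)^2"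
    and L: "\<And>x y z. L x y z = az x y * z + bz x y"
  shows "eval222 a x y z * (az x y)^2 = zcoeff a 2 x y * (L x y z)^2"
  using quadratic_dominated_by_square
      [of "zcoeff a 0 x y" "zcoeff a 1 x y" "zcoeff a 2 x y" "az x y" "bz x y" z]
    nonneg dominated by (simp add: eval222_in_z L)

lemma eval222_dominated_slice_x:
  assumes nonneg: "\<And>x y z. 0 \<le> eval222 a x y z"
    and dominated: "\<And>x y z. eval222 a x y z \<le> (L x y z)^2"
    and L: "\<And>x y z. L x y z = ax y z * x + bx y z"
  shows "eval222 a x y z * (ax y z)^2 = xcoeff a 2 y z * (L x y z)^2"
  using quadratic_dominated_by_square
      [of "xcoeff a 0 y z" "xcoeff a 1 y z" "xcoeff a 2 y z" "ax y z" "bx y z" x]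
    nonneg dominated by (simp add: eval222_in_x L)

lemma eval222_dominated_slice_y:
  assumes nonneg: "\<And>x y z. 0 \<le> eval222 a x y z"
    and dominated: "\<And>x y z. eval222 a x y z \<le> (L x y z)^2"
    and L: "\<And>x y z. L x y z = ay x z * y + by x z"
  shows "eval222 a x y z * (ay x z)^2 = ycoeff a 2 x z * (L x y z)^2"
  using quadratic_dominated_by_square
      [of "ycoeff a 0 x z" "ycoeff a 1 x z" "ycoeff a 2 x z" "ay x z" "by x z" y]
    nonneg dominated by (simp add: eval222_in_y L)

lemma eval222_dominated_leading_x:
  assumes nonneg: "\<And>x y z. 0 \<le> eval222 a x y z"
    and dominated: "\<And>x y z. eval222 a x y z \<le> (L x y z)^2"
    and Lz: "\<And>x y z. L x y z = az x y * z + bz x y"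
    and Lx: "\<And>x y z. L x y z = (px y * z + qx y) * x + bx y z"
  shows "zcoeff a 2 x y * (px y)^2 = x2zcoeff a 2 y * (az x y)^2"
proof (rule quartic_leading_coeff_eq)
  fix z
  have "eval222 a x y z * (px y * z + qx y)^2 = xcoeff a 2 y z * (L x y z)^2"
    by (rule eval222_dominated_slice_x[OF nonneg dominated Lx])
  then show "(zcoeff a 0 x y + zcoeff a 1 x y * z + zcoeff a 2 x y * z^2) * (px y * z + qx y)^2 =
      (x2zcoeff a 0 y + x2zcoeff a 1 y * z + x2zcoeff a 2 y * z^2) * (az x y * z + bz x y)^2"
    by (simp add: eval222_in_z xcoeff_2_in_z Lz)
qed

lemma eval222_dominated_leading_y:
  assumes nonneg: "\<And>x y z. 0 \<le> eval222 a x y z"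
    and dominated: "\<And>x y z. eval222 a x y z \<le> (L x y z)^2"
    and Lz: "\<And>x y z. L x y z = az x y * z + bz x y"
    and Ly: "\<And>x y z. L x y z = (py x * z + qy x) * y + by x z"
  shows "zcoeff a 2 x y * (py x)^2 = y2zcoeff a 2 x * (az x y)^2"
proof (rule quartic_leading_coeff_eq)
  fix z
  have "eval222 a x y z * (py x * z + qy x)^2 = ycoeff a 2 x z * (L x y z)^2"
    by (rule eval222_dominated_slice_y[OF nonneg dominated Ly])
  then show "(zcoeff a 0 x y + zcoeff a 1 x y * z + zcoeff a 2 x y * z^2) * (py x * z + qy x)^2 =
      (y2zcoeff a 0 x + y2zcoeff a 1 x * z + y2zcoeff a 2 x * z^2) * (az x y * z + bz x y)^2"
    by (simp add: eval222_in_z ycoeff_2_in_z Lz)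
qed

text \<open>Where \<open>az \<noteq> 0\<close> this is the slice identity divided by \<open>az^2\<close>; the remaining points
  are reached along lines parallel to the \<open>x\<close>-axis, each of which meets the zero set of
  \<open>az\<close> at most once.\<close>
lemma eval222_eq_multiple_of_square:
  assumes slice: "\<And>x y z. eval222 a x y z * (az x y)^2 = zcoeff a 2 x y * (L x y z)^2"
    and leading: "\<And>x y. zcoeff a 2 x y = c * (az x y)^2"
    and Lx: "\<And>x y z. L x y z = ax y z * x + bx y z"
    and single_root: "\<And>x y t. az x y = 0 \<Longrightarrow> az t y = 0 \<Longrightarrow> t = x"
  shows "eval222 a x y z = c * (L x y z)^2"
proof -
  have off_roots: "eval222 a x y z = c * (L x y z)^2" if "az x y \<noteq> 0" for x y z
  proof -
    have "(eval222 a x y z - c * (L x y z)^2) * (az x y)^2 = 0"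
      using slice[of x y z] leading[of x y] by (simp add: algebra_simps)
    with that show ?thesis by simp
  qed
  show ?thesis
  proof (cases "az x y = 0")
    case True
    have "(xcoeff a 0 y z - c * (bx y z)^2) + (xcoeff a 1 y z - 2*c * ax y z * bx y z) * x
        + (xcoeff a 2 y z - c * (ax y z)^2) * x^2 = 0"
    proof (rule quadratic_zero_at_point_if_zero_elsewhere)
      fix t assume "t \<noteq> x"
      then have "eval222 a t y z = c * (L t y z)^2"
        using off_roots single_root True by blast
      then show "(xcoeff a 0 y z - c * (bx y z)^2) + (xcoeff a 1 y z - 2*c * ax y z * bx y z) * t
          + (xcoeff a 2 y z - c * (ax y z)^2) * t^2 = 0"
        by (simp add: eval222_in_x Lx algebra_simps power2_eq_square)
    qed
    then show ?thesis
      by (simp add: eval222_in_x Lx algebra_simps power2_eq_square)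
  qed (rule off_roots)
qed

lemma eval222_dominated_by_square_linear_slope:
  fixes s p q r d :: real
  assumes "s \<noteq> 0"
    and L: "\<And>x y z. L x y z = (s*x + y) * z + p*x*y + q*x + r*y + d"
    and nonneg: "\<And>x y z. 0 \<le> eval222 a x y z"
    and dominated: "\<And>x y z. eval222 a x y z \<le> (L x y z)^2"
  shows "\<exists>c. \<forall>x y z. eval222 a x y z = c * (L x y z)^2"
proof -
  have Lz: "L x y z = (s*x + y) * z + (p*x*y + q*x + r*y + d)"
    and Lx: "L x y z = (s * z + (p*y + q)) * x + (y*z + r*y + d)"
    and Ly: "L x y z = (1 * z + (p*x + r)) * y + (s*x*z + q*x + d)" for x y z
    by (simp_all add: L algebra_simps)
  have lead_x: "zcoeff a 2 x y * s^2 = x2zcoeff a 2 y * (s*x + y)^2" for x y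
    using eval222_dominated_leading_x[OF nonneg dominated Lz Lx] by simp
  have lead_y: "zcoeff a 2 x y = y2zcoeff a 2 x * (s*x + y)^2" for x y
    using eval222_dominated_leading_y[OF nonneg dominated Lz Ly] by simp
  have relation: "x2zcoeff a 2 y = s^2 * y2zcoeff a 2 x" if "s*x + y \<noteq> 0" for x y
    using lead_x[of x y] lead_y[of x y] that by (simp add: algebra_simps)
  define c where "c = y2zcoeff a 2 0"
  have "y2zcoeff a 2 x = c" for x
  proof -
    have "s*x + (\<bar>s*x\<bar> + 1) \<noteq> 0" "s*0 + (\<bar>s*x\<bar> + 1) \<noteq> 0"
      by (simp_all add: add_nonneg_pos)
    then show ?thesis
      using relation[of x "\<bar>s*x\<bar> + 1"] relation[of 0 "\<bar>s*x\<bar> + 1"] \<open>s \<noteq> 0\<close> by (simp add: c_def)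
  qed
  then have "zcoeff a 2 x y = c * (s*x + y)^2" for x y
    using lead_y by simp
  moreover have "t = x" if "s*x + y = 0" "s*t + y = 0" for x y t
  proof -
    have "s*t = s*x" using that by linarith
    with \<open>s \<noteq> 0\<close> show ?thesis by simp
  qed
  ultimately have "eval222 a x y z = c * (L x y z)^2" for x y z
    by (rule eval222_eq_multiple_of_square[OF eval222_dominated_slice_z[OF nonneg dominated Lz] _ Lx])
  then show ?thesis by blast
qed

lemma eval222_dominated_by_square_bilinear_slope:
  fixes p q r d :: real
  assumes L: "\<And>x y z. L x y z = (x*y - 1) * z + p*x*y + q*x + r*y + d"
    and nonneg: "\<And>x y z. 0 \<le> eval222 a x y z"
    and dominated: "\<And>x y z. eval222 a x y z \<le> (L x y z)^2"
  shows "\<exists>c. \<forall>x y z. eval222 a x y z = c * (L x y z)^2"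
proof -
  have Lz: "L x y z = (x*y - 1) * z + (p*x*y + q*x + r*y + d)"
    and Lx: "L x y z = (y * z + (p*y + q)) * x + (r*y + d - z)"
    and Ly: "L x y z = (x * z + (p*x + r)) * y + (q*x + d - z)" for x y z
    by (simp_all add: L algebra_simps)
  have lead_x: "zcoeff a 2 x y * y^2 = x2zcoeff a 2 y * (x*y - 1)^2" for x y
    using eval222_dominated_leading_x[OF nonneg dominated Lz Lx] .
  have lead_y: "zcoeff a 2 x y * x^2 = y2zcoeff a 2 x * (x*y - 1)^2" for x y
    using eval222_dominated_leading_y[OF nonneg dominated Lz Ly] .
  have relation: "x2zcoeff a 2 y * x^2 = y2zcoeff a 2 x * y^2" if "x*y \<noteq> 1" for x y
  proof -
    have "(x2zcoeff a 2 y * x^2) * (x*y - 1)^2 = (y2zcoeff a 2 x * y^2) * (x*y - 1)^2"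
      using lead_x[of x y] lead_y[of x y] by algebra
    with that show ?thesis by simp
  qed
  define c where "c = x2zcoeff a 2 (-1)"
  have at_2: "y2zcoeff a 2 2 = 4*c" and at_minus_2: "y2zcoeff a 2 (-2) = 4*c"
    using relation[of 2 "-1"] relation[of "-2" "-1"] by (simp_all add: c_def)
  have x2z: "x2zcoeff a 2 y = c * y^2" for y
  proof (cases "y \<le> 0")
    case True
    then have "2*y \<noteq> 1" by simp
    then show ?thesis using relation[of 2 y] at_2 by simp
  next
    case False
    then have "-2*y \<noteq> 1" by simp
    then show ?thesis using relation[of "-2" y] at_minus_2 by simp
  qed
  have "zcoeff a 2 x y = c * (x*y - 1)^2" for x y
  proof -
    have "(z2ycoeff a 0 x - c) + (z2ycoeff a 1 x + 2*c*x) * 0 + (z2ycoeff a 2 x - c * x^2) * 0^2 = 0"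
    proof (rule quadratic_zero_at_point_if_zero_elsewhere)
      fix t :: real assume "t \<noteq> 0"
      then have "zcoeff a 2 x t = c * (x*t - 1)^2"
        using lead_x[of x t] x2z[of t] by (simp add: algebra_simps)
      then show "(z2ycoeff a 0 x - c) + (z2ycoeff a 1 x + 2*c*x) * t + (z2ycoeff a 2 x - c * x^2) * t^2 = 0"
        by (simp add: zcoeff_2_in_y algebra_simps power2_eq_square)
    qed
    then have "zcoeff a 2 x 0 = c * (x*0 - 1)^2"
      by (simp add: zcoeff_2_in_y)
    moreover have "zcoeff a 2 x y = c * (x*y - 1)^2" if "y \<noteq> 0"
      using lead_x[of x y] x2z[of y] that by (simp add: algebra_simps)
    ultimately show ?thesis by (cases "y = 0") auto
  qed
  moreover have "t = x" if "x*y - 1 = 0" "t*y - 1 = 0" for x y t :: real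
  proof -
    have "t*y = x*y" "y \<noteq> 0" using that by auto
    then show ?thesis by simp
  qed
  ultimately have "eval222 a x y z = c * (L x y z)^2" for x y z
    by (rule eval222_eq_multiple_of_square[OF eval222_dominated_slice_z[OF nonneg dominated Lz] _ Lx])
  then show ?thesis by blast
qed

section \<open>Squares of multiaffine polynomials\<close>

definition poly111 :: "(real \<Rightarrow> real \<Rightarrow> real \<Rightarrow> real) \<Rightarrow> bool" where
  "poly111 L \<longleftrightarrow> (\<exists>b :: nat \<Rightarrow> nat \<Rightarrow> nat \<Rightarrow> real.
     L = (\<lambda>x y z. \<Sum>k\<le>1. \<Sum>l\<le>1. \<Sum>m\<le>1. b k l m * x^k * y^l * z^m))"

lemma poly111_intro:
  assumes "\<And>x y z. L x y z = c0 + c1*x + c2*y + c3*z + c4*x*y + c5*x*z + c6*y*z + c7*x*y*z"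
  shows "poly111 L"
  unfolding poly111_def
proof (intro exI ext)
  fix x y z :: real
  show "L x y z = (\<Sum>k\<le>1. \<Sum>l\<le>1. \<Sum>m\<le>1.
      [[[c0, c3], [c2, c6]], [[c1, c5], [c4, c7]]] ! k ! l ! m * x^k * y^l * z^m)"
    by (simp add: assms algebra_simps)
qed

lemma poly222_zero: "poly222 (\<lambda>x y z. 0)"
  unfolding poly222_def by (intro exI[of _ "\<lambda>k l m. 0"]) simp

lemma poly222_add:
  assumes "poly222 f" "poly222 g"
  shows "poly222 (\<lambda>x y z. f x y z + g x y z)"
proof -
  obtain a b where "f = eval222 a" "g = eval222 b"
    using assms by (auto simp: poly222_iff_eval222)
  then have "(\<lambda>x y z. f x y z + g x y z) = eval222 (\<lambda>k l m. a k l m + b k l m)"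
    by (simp add: fun_eq_iff eval222_def sum.distrib algebra_simps)
  then show ?thesis by (auto simp: poly222_iff_eval222)
qed

lemma poly222_sum:
  assumes "finite I" "\<And>i. i \<in> I \<Longrightarrow> poly222 (f i)"
  shows "poly222 (\<lambda>x y z. \<Sum>i\<in>I. f i x y z)"
  using assms by (induction I rule: finite_induct) (simp_all add: poly222_zero poly222_add)

lemma poly222_monomial:
  assumes "k \<le> 2" "l \<le> 2" "m \<le> 2"
  shows "poly222 (\<lambda>x y z. c * x^k * y^l * z^m)"
  unfolding poly222_def
proof (intro exI ext)
  fix x y z :: real
  have "(if m' = m then if l' = l then if k' = k then c else 0 else 0 else 0) * x^k' * y^l' * z^m'
     = (if m' = m then if l' = l then if k' = k then c * x^k * y^l * z^m else 0 else 0 else 0)"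
    for k' l' m' by simp
  then show "c * x^k * y^l * z^m = (\<Sum>k'\<le>2. \<Sum>l'\<le>2. \<Sum>m'\<le>2.
      (if m' = m then if l' = l then if k' = k then c else 0 else 0 else 0) * x^k' * y^l' * z^m')"
    using assms by (simp add: sum.delta)
qed

lemma poly222_square_poly111:
  assumes "poly111 L"
  shows "poly222 (\<lambda>x y z. (L x y z)^2)"
proof -
  obtain b where L: "L = (\<lambda>x y z. \<Sum>k\<le>1. \<Sum>l\<le>1. \<Sum>m\<le>1. b k l m * x^k * y^l * z^m)"
    using assms by (auto simp: poly111_def)
  have product: "poly222 (\<lambda>x y z. (b k l m * x^k * y^l * z^m) * (b k' l' m' * x^k' * y^l' * z^m'))"
    if "k \<le> 1" "l \<le> 1" "m \<le> 1" "k' \<le> 1" "l' \<le> 1" "m' \<le> 1" for k l m k' l' m'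
    using poly222_monomial[of "k + k'" "l + l'" "m + m'" "b k l m * b k' l' m'"] that
    by (simp add: power_add algebra_simps)
  have "(\<lambda>x y z. (L x y z)^2) = (\<lambda>x y z. \<Sum>k\<le>1. \<Sum>k'\<le>1. \<Sum>l\<le>1. \<Sum>l'\<le>1. \<Sum>m\<le>1. \<Sum>m'\<le>1.
      (b k l m * x^k * y^l * z^m) * (b k' l' m' * x^k' * y^l' * z^m'))"
    by (simp only: L power2_eq_square sum_product)
  then show ?thesis
    by (simp only:) (intro poly222_sum product; simp)
qed

lemma cpoly3_of_real_poly111:
  assumes "poly111 L"
  shows "cpoly3 (\<lambda>x y z. complex_of_real (L x y z))"
proof -
  obtain b where L: "L = (\<lambda>x y z. \<Sum>k\<le>1. \<Sum>l\<le>1. \<Sum>m\<le>1. b k l m * x^k * y^l * z^m)"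
    using assms by (auto simp: poly111_def)
  show ?thesis
    unfolding cpoly3_def
    by (intro exI[of _ 1] exI[of _ "\<lambda>k l m. complex_of_real (b k l m)"]) (simp add: L fun_eq_iff)
qed

lemma square_poly111_in_QP222:
  assumes "poly111 L"
  shows "(\<lambda>x y z. (L x y z)^2) \<in> QP222"
proof -
  have "\<exists>(r::nat) F. (\<forall>j<r. cpoly3 (F j)) \<and>
      (\<lambda>x y z. (L x y z)^2) = (\<lambda>x y z. \<Sum>j<r. (cmod (F j x y z))^2)"
    by (intro exI[of _ "1::nat"] exI[of _ "\<lambda>j x y z. complex_of_real (L x y z)"])
      (simp add: cpoly3_of_real_poly111[OF assms])
  then show ?thesis
    using poly222_square_poly111[OF assms] unfolding QP222_def sigmaP222_def by simp
qed

lemma extremal_square_poly111: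
  assumes L: "poly111 L" and nonzero: "L x0 y0 z0 \<noteq> 0"
    and rigid: "\<And>a. (\<And>x y z. 0 \<le> eval222 a x y z) \<Longrightarrow> (\<And>x y z. eval222 a x y z \<le> (L x y z)^2)
      \<Longrightarrow> \<exists>c. \<forall>x y z. eval222 a x y z = c * (L x y z)^2"
  shows "extremal QP222 (\<lambda>x y z. (L x y z)^2) \<and> extremal sigmaP222 (\<lambda>x y z. (L x y z)^2)"
proof -
  let ?P = "\<lambda>x y z. (L x y z)^2"
  have multiple: "\<exists>c\<ge>0. g = (\<lambda>x y z. c * ?P x y z)"
    if g: "g \<in> sigmaP222" and below: "\<And>x y z. g x y z \<le> ?P x y z" for g
  proof -
    obtain a where a: "g = eval222 a" and nonneg: "\<And>x y z. 0 \<le> eval222 a x y z"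
      using g by (auto simp: sigmaP222_def poly222_iff_eval222)
    obtain c where c: "\<And>x y z. g x y z = c * ?P x y z"
      using rigid[OF nonneg] below by (auto simp: a)
    have "0 \<le> c * (L x0 y0 z0)^2"
      using nonneg[of x0 y0 z0] c[of x0 y0 z0] by (simp add: a)
    with nonzero have "c \<ge> 0"
      by (simp add: zero_le_mult_iff)
    with c show ?thesis by (auto simp: fun_eq_iff)
  qed
  have "extremal U ?P" if "?P \<in> U" "U \<subseteq> sigmaP222" for U
    unfolding extremal_def
  proof (intro conjI allI impI)
    fix g h assume "g \<in> U" "h \<in> U" and decomp: "?P = (\<lambda>x y z. g x y z + h x y z)"
    then have "g \<in> sigmaP222" "h \<in> sigmaP222"
      using that by auto
    moreover from this have "g x y z \<le> ?P x y z" "h x y z \<le> ?P x y z" for x y z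
      using fun_cong[OF fun_cong[OF fun_cong[OF decomp]], of x y z] by (auto simp: sigmaP222_def)
    ultimately show "\<exists>c\<ge>0. g = (\<lambda>x y z. c * ?P x y z)" "\<exists>c\<ge>0. h = (\<lambda>x y z. c * ?P x y z)"
      using multiple by blast+
  qed (use that in simp)
  moreover have "QP222 \<subseteq> sigmaP222"
    by (auto simp: QP222_def)
  ultimately show ?thesis
    using square_poly111_in_QP222[OF L] by blast
qed

lemma extremal_square_linear_slope:
  fixes s p q r d :: real
  assumes "s \<noteq> 0"
    and L: "\<And>x y z. L x y z = (s*x + y) * z + p*x*y + q*x + r*y + d"
  shows "extremal QP222 (\<lambda>x y z. (L x y z)^2) \<and> extremal sigmaP222 (\<lambda>x y z. (L x y z)^2)"
proof (rule extremal_square_poly111)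
  show "poly111 L"
    by (rule poly111_intro[of _ d q r 0 p s 1 0]) (simp add: L algebra_simps)
  show "L 0 1 (1 - r - d) \<noteq> 0"
    by (simp add: L)
qed (rule eval222_dominated_by_square_linear_slope[OF \<open>s \<noteq> 0\<close> L])

lemma extremal_square_bilinear_slope:
  fixes p q r d :: real
  assumes L: "\<And>x y z. L x y z = (x*y - 1) * z + p*x*y + q*x + r*y + d"
  shows "extremal QP222 (\<lambda>x y z. (L x y z)^2) \<and> extremal sigmaP222 (\<lambda>x y z. (L x y z)^2)"
proof (rule extremal_square_poly111)
  show "poly111 L"
    by (rule poly111_intro[of _ d q r "-1" p 0 0 1]) (simp add: L algebra_simps)
  show "L 0 0 (d - 1) \<noteq> 0"
    by (simp add: L)
qed (rule eval222_dominated_by_square_bilinear_slope[OF L])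

theorem proposition6:
  shows "\<forall>P \<in> {(\<lambda>x y z. (x*y*z - z + y + x)\<^sup>2),
                 (\<lambda>x y z. (y*z - x*z + x*y + 1)\<^sup>2),
                 (\<lambda>x y z. (y*z - x*z - x*y - 1)\<^sup>2),
                 (\<lambda>x y z. (x*z + y*z + x*y - 1)\<^sup>2)} :: (real \<Rightarrow> real \<Rightarrow> real \<Rightarrow> real) set.
           extremal QP222 P \<and> extremal sigmaP222 P"
proof -
  have "extremal QP222 (\<lambda>x y z. (x*y*z - z + y + x)^2)
      \<and> extremal sigmaP222 (\<lambda>x y z. (x*y*z - z + y + x)^2)"
    by (rule extremal_square_bilinear_slope[where p = 0 and q = 1 and r = 1 and d = 0])
      (simp add: algebra_simps)
  moreover have "extremal QP222 (\<lambda>x y z. (y*z - x*z + x*y + 1)^2)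
      \<and> extremal sigmaP222 (\<lambda>x y z. (y*z - x*z + x*y + 1)^2)"
    by (rule extremal_square_linear_slope[where s = "-1" and p = 1 and q = 0 and r = 0 and d = 1])
      (simp_all add: algebra_simps)
  moreover have "extremal QP222 (\<lambda>x y z. (y*z - x*z - x*y - 1)^2)
      \<and> extremal sigmaP222 (\<lambda>x y z. (y*z - x*z - x*y - 1)^2)"
    by (rule extremal_square_linear_slope[where s = "-1" and p = "-1" and q = 0 and r = 0 and d = "-1"])
      (simp_all add: algebra_simps)
  moreover have "extremal QP222 (\<lambda>x y z. (x*z + y*z + x*y - 1)^2)
      \<and> extremal sigmaP222 (\<lambda>x y z. (x*z + y*z + x*y - 1)^2)"
    by (rule extremal_square_linear_slope[where s = 1 and p = 1 and q = 0 and r = 0 and d = "-1"])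
      (simp_all add: algebra_simps)
  ultimately show ?thesis by simp
qed

end
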